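(* Let $n^*_1,n^*_2\ge1$, $n^*=n^*_1+n^*_2$. Let $X_1,\dots,X_{n^*}$ be dependent nonnegative random variables sharing an Archimedean survival copula with generator $\psi_1$ ($\phi_1=\psi_1^{-1}$), with $X_i\sim F_1(\lambda_1x)$ for $i\le n^*_1$ and $X_j\sim F_2(\lambda_2x)$ for $j>n^*_1$; let $Y_1,\dots,Y_{n^*}$ be dependent nonnegative random variables sharing an Archimedean survival copula with generator $\psi_2$ ($\phi_2=\psi_2^{-1}$), with $Y_i\sim F_1(\mu_1x)$ for $i\le n^*_1$ and $Y_j\sim F_2(\mu_2x)$ for $j>n^*_1$ ($\lambda_k,\mu_k>0$). Let $X_{1:n^*}(n^*_1,n^*_2)=\min_iX_i$, $Y_{1:n^*}(n^*_1,n^*_2)=\min_iY_i$. Suppose $\phi_2\circ\psi_1$ is super-additive, $\psi_1$ or $\psi_2$ is log-convex, and $r_1$ or $r_2$ is increasing. Suppose further that either $r_1(x)\le r_2(x)$ for all $x>0$, $n^*_1\le n^*_2$ and $\boldsymbol\lambda=(\lambda_1,\lambda_2),\boldsymbol\mu=(\mu_1,\mu_2)\in\mathcal E_+$; or $r_1(x)\ge r_2(x)$ for all $x>0$, $n^*_1\ge n^*_2$ and $\boldsymbol\lambda,\boldsymbol\mu\in\mathcal D_+$. Then $$(\underbrace{\lambda_1,\dots,\lambda_1}_{n^*_1},\underbrace{\lambda_2,\dots,\lambda_2}_{n^*_2})\succeq_{w}(\underbrace{\mu_1,\dots,\mu_1}_{n^*_1},\underbrace{\mu_2,\dots,\mu_2}_{n^*_2})\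 \Longrightarrow\ X_{1:n^*}(n^*_1,n^*_2)\le_{st}Y_{1:n^*}(n^*_1,n^*_2).$$
   Context: $Z\sim F(\lambda x)$ means $Z$ has distribution function $x\mapsto F(\lambda x)$. Archimedean generator: a continuous nonincreasing $\psi:[0,\infty)\to[0,1]$ with $\psi(0)=1$, $\psi(\infty)=0$, which is $m$-monotone; $\phi=\psi^{-1}$. $Z_1,\dots,Z_m$ with marginal survival functions $\bar G_i=1-G_i$ share an Archimedean survival copula with generator $\psi$ if $P(Z_1>z_1,\dots,Z_m>z_m)=\psi(\sum_i\phi(\bar G_i(z_i)))$. $F_1,F_2$ are absolutely continuous distribution functions on $[0,\infty)$ with densities $f_1,f_2$ and hazard rates $r_k=f_k/(1-F_k)$. Super-additive: $g(x)+g(y)\le g(x+y)$. $\mathcal E_+=\{(x_1,x_2):0<x_1\le x_2\}$, $\mathcal D_+=\{(x_1,x_2):x_1\ge x_2>0\}$. For $\boldsymbol a,\boldsymbol b\in\mathbb R^k$ with increasingly ordered coordinates $a_{(1)}\le\dots\le a_{(k)}$: $\boldsymbol a\succeq_w\boldsymbol b$ means $\sum_{i=l}^ka_{(i)}\ge\sum_{i=l}^kb_{(i)}$ for all $l$. $U\le_{st}V$ means $P(U>x)\le P(V>x)$ for all $x$. Increasing/decreasing are in the weak sense. *)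

theory Defs
  imports "HOL-Probability.Probability"
begin

definition d_monotone :: "nat \<Rightarrow> (real \<Rightarrow> real) \<Rightarrow> bool" where
  "d_monotone d \<psi> \<longleftrightarrow>
     continuous_on {0..} \<psi> \<and>
     (\<forall>k. Suc k \<le> d - 2 \<longrightarrow> (\<forall>x>0. ((deriv ^^ k) \<psi> has_real_derivative (deriv ^^ Suc k) \<psi> x) (at x))) \<and>
     (\<forall>k\<le>d - 2. \<forall>x>0. 0 \<le> (-1) ^ k * (deriv ^^ k) \<psi> x) \<and>
     monotone_on {0<..} (\<le>) (\<ge>) (\<lambda>x. (-1) ^ (d - 2) * (deriv ^^ (d - 2)) \<psi> x) \<and>
     convex_on {0<..} (\<lambda>x. (-1) ^ (d - 2) * (deriv ^^ (d - 2)) \<psi> x)"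

definition arch_generator :: "nat \<Rightarrow> (real \<Rightarrow> real) \<Rightarrow> bool" where
  "arch_generator m \<psi> \<longleftrightarrow>
     continuous_on {0..} \<psi> \<and>
     monotone_on {0..} (\<le>) (\<ge>) \<psi> \<and>
     (\<forall>x\<ge>0. 0 \<le> \<psi> x \<and> \<psi> x \<le> 1) \<and>
     \<psi> 0 = 1 \<and> (\<psi> \<longlongrightarrow> 0) at_top \<and>
     d_monotone m \<psi>"

text \<open>The (generalised) inverse phi = psi^{-1}: phi(u) = inf{x >= 0. psi x <= u},
  extended-real valued (phi 0 = infinity when psi never vanishes).
  For u in (0,1] it is the usual inverse inf{x. psi x = u}.\<close>
definition gen_inv :: "(real \<Rightarrow> real) \<Rightarrow> real \<Rightarrow> ereal" where
  "gen_inv \<psi> u = Inf (ereal ` {x. 0 \<le> x \<and> \<psi> x \<le> u})"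

definition psi_ext :: "(real \<Rightarrow> real) \<Rightarrow> ereal \<Rightarrow> real" where
  "psi_ext \<psi> t = (if t = \<infinity> then 0 else \<psi> (real_of_ereal t))"

definition abs_cont_df :: "(real \<Rightarrow> real) \<Rightarrow> (real \<Rightarrow> real) \<Rightarrow> bool" where
  "abs_cont_df F f \<longleftrightarrow>
     (\<forall>x. 0 \<le> f x) \<and> f integrable_on {0..} \<and> integral {0..} f = 1 \<and>
     (\<forall>x<0. F x = 0) \<and> (\<forall>x\<ge>0. F x = integral {0..x} f)"

definition hazard :: "(real \<Rightarrow> real) \<Rightarrow> (real \<Rightarrow> real) \<Rightarrow> real \<Rightarrow> ereal" where
  "hazard F f x = (if F x < 1 then ereal (f x / (1 - F x)) else \<infinity>)"

definition superadditive_on :: "real set \<Rightarrow> (real \<Rightarrow> ereal) \<Rightarrow> bool" where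
  "superadditive_on S g \<longleftrightarrow> (\<forall>x\<in>S. \<forall>y\<in>S. g x + g y \<le> g (x + y))"

definition log_convex_on :: "real set \<Rightarrow> (real \<Rightarrow> real) \<Rightarrow> bool" where
  "log_convex_on S g \<longleftrightarrow> (\<forall>x\<in>S. 0 < g x) \<and> convex_on S (\<lambda>x. ln (g x))"

text \<open>Weak (sub)majorization a \<succeq>_w b: for every l, the sum of the largest
  k-l+1 entries of a dominates that of b (k = length).\<close>
definition weak_majorizes :: "real list \<Rightarrow> real list \<Rightarrow> bool" where
  "weak_majorizes a b \<longleftrightarrow> length a = length b \<and>
     (\<forall>l<length a. sum_list (drop l (sort b)) \<le> sum_list (drop l (sort a)))"

definition arch_survival_copula ::
  "'a measure \<Rightarrow> nat \<Rightarrow> (nat \<Rightarrow> 'a \<Rightarrow> real) \<Rightarrow> (nat \<Rightarrow> real \<Rightarrow> real) \<Rightarrow> (real \<Rightarrow> real) \<Rightarrow> bool" where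
  "arch_survival_copula M m Z Gbar \<psi> \<longleftrightarrow>
     (\<forall>z::nat \<Rightarrow> real. measure M {\<omega>\<in>space M. \<forall>i<m. Z i \<omega> > z i}
        = psi_ext \<psi> (\<Sum>i<m. gen_inv \<psi> (Gbar i (z i))))"

end

theory Submission
  imports Defs
begin

text \<open>Evaluated on the diagonal, the survival copulas give
  \<open>P(min X > x) = \<psi>\<^sub>1(\<Sum>\<^sub>i \<phi>\<^sub>1(S\<^sub>i(\<lambda>\<^sub>i x)))\<close> and \<open>P(min Y > x) = \<psi>\<^sub>2(\<Sum>\<^sub>i \<phi>\<^sub>2(S\<^sub>i(\<mu>\<^sub>i x)))\<close>
  with \<open>S\<^sub>i = 1 - F\<^sub>i\<close>. Super-additivity of \<open>\<phi>\<^sub>2 \<circ> \<psi>\<^sub>1\<close> gives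
  \<open>\<psi>\<^sub>1(\<Sum> \<phi>\<^sub>1(u\<^sub>i)) \<le> \<psi>\<^sub>2(\<Sum> \<phi>\<^sub>2(u\<^sub>i))\<close>, so it suffices to show
  \<open>\<Sum> \<phi>(S\<^sub>i(\<mu>\<^sub>i x)) \<le> \<Sum> \<phi>(S\<^sub>i(\<lambda>\<^sub>i x))\<close> for whichever generator \<open>\<psi>\<close> is log-convex.

  Take the case \<open>r\<^sub>1 \<le> r\<^sub>2\<close>; the other one is symmetric. Weak majorization of the two-block vectors
  means \<open>\<mu>\<^sub>2 \<le> \<lambda>\<^sub>2\<close> and \<open>n\<^sub>1\<mu>\<^sub>1 + n\<^sub>2\<mu>\<^sub>2 \<le> n\<^sub>1\<lambda>\<^sub>1 + n\<^sub>2\<lambda>\<^sub>2\<close>. If \<open>\<mu>\<^sub>1 \<le> \<lambda>\<^sub>1\<close> the comparison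
  holds termwise. Otherwise the increasing hazard rate yields a level \<open>c\<close> with \<open>r\<^sub>1 \<le> c\<close> on
  \<open>(0, \<mu>\<^sub>1x]\<close> and \<open>r\<^sub>2 \<ge> c\<close> on \<open>[\<mu>\<^sub>2x, \<infinity>)\<close>. Integrating the hazard rates, the log-survival
  gained by the first block, at most \<open>c n\<^sub>1(\<mu>\<^sub>1 - \<lambda>\<^sub>1)x\<close>, is no more than the log-survival lost by
  the second block, at least \<open>c n\<^sub>2(\<lambda>\<^sub>2 - \<mu>\<^sub>2)x\<close>. As \<open>ln \<psi>\<close> is convex and decreasing, comparing
  its chord slopes turns this trade of log-survivals into the same trade of \<open>\<phi>\<close>-values.\<close>

lemma arch_generatorD:
  assumes "arch_generator m \<psi>"
  shows "continuous_on {0..} \<psi>" "\<And>x y. 0 \<le> x \<Longrightarrow> x \<le> y \<Longrightarrow> \<psi> y \<le> \<psi> x"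
    "\<And>x. 0 \<le> x \<Longrightarrow> 0 \<le> \<psi> x" "\<And>x. 0 \<le> x \<Longrightarrow> \<psi> x \<le> 1" "\<psi> 0 = 1"
    "(\<psi> \<longlongrightarrow> 0) at_top"
  using assms unfolding arch_generator_def monotone_on_def by auto

lemma gen_inv_nonneg: "0 \<le> gen_inv \<psi> u"
  unfolding gen_inv_def by (auto intro: Inf_greatest)

lemma gen_inv_antimono: "u \<le> v \<Longrightarrow> gen_inv \<psi> v \<le> gen_inv \<psi> u"
  unfolding gen_inv_def by (rule Inf_superset_mono) auto

lemma gen_inv_eq_PInf:
  assumes "{x. 0 \<le> x \<and> \<psi> x \<le> u} = {}"
  shows "gen_inv \<psi> u = \<infinity>"
  unfolding gen_inv_def assms by (simp add: top_ereal_def)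

lemma arch_generator_sublevel_nonempty:
  assumes "arch_generator m \<psi>" and "0 < u"
  shows "{x. 0 \<le> x \<and> \<psi> x \<le> u} \<noteq> {}"
proof -
  have "eventually (\<lambda>x. \<psi> x < u) at_top"
    using arch_generatorD(6)[OF assms(1)] assms(2) by (rule order_tendstoD)
  then obtain x0 where "\<And>x. x \<ge> x0 \<Longrightarrow> \<psi> x < u"
    by (auto simp: eventually_at_top_linorder)
  then have "\<psi> (max x0 0) < u" by simp
  then have "max x0 0 \<in> {x. 0 \<le> x \<and> \<psi> x \<le> u}" by simp
  then show ?thesis by blast
qed

text \<open>The sublevel set is closed, so its infimum is attained; by the intermediate value theorem
  \<open>\<psi>\<close> takes the value \<open>u\<close> there.\<close>
lemma gen_inv_eq_ereal:
  assumes ag: "arch_generator m \<psi>" and u: "u \<le> 1"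
    and ne: "{x. 0 \<le> x \<and> \<psi> x \<le> u} \<noteq> {}"
  obtains h where "0 \<le> h" "gen_inv \<psi> u = ereal h" "\<psi> h = u"
proof -
  define S where "S = {x. 0 \<le> x \<and> \<psi> x \<le> u}"
  have cont: "continuous_on {0..} \<psi>" using arch_generatorD(1)[OF ag] .
  have "S = {0..} \<inter> \<psi> -` {..u}" unfolding S_def by auto
  then have "closed S" by (simp add: continuous_closed_preimage[OF cont])
  moreover have bdd: "bdd_below S" unfolding S_def by (auto intro: bdd_belowI[of _ 0])
  ultimately have hS: "Inf S \<in> S" using closed_contains_Inf[OF ne[folded S_def]] by blast
  have least: "\<And>y. y \<in> S \<Longrightarrow> Inf S \<le> y" using bdd by (auto intro: cInf_lower)
  have eq: "gen_inv \<psi> u = ereal (Inf S)"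
    unfolding gen_inv_def S_def[symmetric]
  proof (rule antisym)
    show "Inf (ereal ` S) \<le> ereal (Inf S)" using hS by (auto intro: Inf_lower)
    show "ereal (Inf S) \<le> Inf (ereal ` S)" using least by (auto intro: Inf_greatest)
  qed
  have "\<exists>x. 0 \<le> x \<and> x \<le> Inf S \<and> \<psi> x = u"
    using hS arch_generatorD[OF ag] u continuous_on_subset[OF cont, of "{0..Inf S}"]
    unfolding S_def by (intro IVT2') auto
  then obtain x where x: "0 \<le> x" "x \<le> Inf S" "\<psi> x = u" by blast
  then have "Inf S \<le> x" by (intro least) (simp add: S_def)
  with x have "x = Inf S" by simp
  with x eq show ?thesis using that by blast
qed

lemma gen_inv_pos_eq_ereal:
  assumes "arch_generator m \<psi>" and "0 < u" "u \<le> 1"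
  obtains h where "0 \<le> h" "gen_inv \<psi> u = ereal h" "\<psi> h = u"
  using gen_inv_eq_ereal[OF assms(1,3) arch_generator_sublevel_nonempty[OF assms(1,2)]] .

lemma psi_ext_nonneg: "arch_generator m \<psi> \<Longrightarrow> 0 \<le> t \<Longrightarrow> 0 \<le> psi_ext \<psi> t"
  unfolding psi_ext_def using arch_generatorD(3)[of m \<psi>] by (auto simp: real_of_ereal_pos)

lemma psi_ext_antimono:
  assumes ag: "arch_generator m \<psi>" and "0 \<le> s" "s \<le> t"
  shows "psi_ext \<psi> t \<le> psi_ext \<psi> s"
proof (cases "t = \<infinity>")
  case True
  then show ?thesis using psi_ext_nonneg[OF ag, of s] assms by (simp add: psi_ext_def)
next
  case False
  with assms show ?thesis
    unfolding psi_ext_def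
    using arch_generatorD(2)[OF ag, of "real_of_ereal s" "real_of_ereal t"]
    by (cases s; cases t) auto
qed

lemma psi_ext_gen_inv:
  assumes ag: "arch_generator m \<psi>" and "0 \<le> v" "v \<le> 1"
  shows "psi_ext \<psi> (gen_inv \<psi> v) = v"
proof (cases "{x. 0 \<le> x \<and> \<psi> x \<le> v} = {}")
  case True
  then have "v = 0" using arch_generator_sublevel_nonempty[OF ag, of v] assms by force
  then show ?thesis using True by (simp add: gen_inv_eq_PInf psi_ext_def)
next
  case False
  then obtain h where "gen_inv \<psi> v = ereal h" "\<psi> h = v"
    using gen_inv_eq_ereal[OF ag \<open>v \<le> 1\<close>] by blast
  then show ?thesis by (simp add: psi_ext_def)
qed

lemma superadditive_on_sum:
  assumes sup: "superadditive_on {0..} g" and "0 \<le> g 0"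
    and "finite I" and "\<And>i. i \<in> I \<Longrightarrow> 0 \<le> a i"
  shows "(\<Sum>i\<in>I. g (a i)) \<le> g (\<Sum>i\<in>I. a i)"
  using assms(3,4)
proof (induction I rule: finite_induct)
  case empty
  then show ?case using \<open>0 \<le> g 0\<close> by simp
next
  case (insert j I)
  have "(\<Sum>i\<in>insert j I. g (a i)) \<le> g (a j) + g (\<Sum>i\<in>I. a i)"
    using insert by (simp add: add_left_mono)
  also have "\<dots> \<le> g (a j + (\<Sum>i\<in>I. a i))"
    using sup insert.prems unfolding superadditive_on_def by (simp add: sum_nonneg)
  finally show ?case using insert by simp
qed

text \<open>Applied to \<open>a\<^sub>i = \<phi>\<^sub>1(u\<^sub>i)\<close>, super-additivity of \<open>\<phi>\<^sub>2 \<circ> \<psi>\<^sub>1\<close> reads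
  \<open>\<Sum>\<^sub>i \<phi>\<^sub>2(u\<^sub>i) \<le> \<phi>\<^sub>2(\<psi>\<^sub>1(\<Sum>\<^sub>i \<phi>\<^sub>1(u\<^sub>i)))\<close>; now apply the decreasing \<open>\<psi>\<^sub>2\<close>.\<close>
lemma psi_ext_sum_gen_inv_le:
  assumes ag1: "arch_generator m \<psi>1" and ag2: "arch_generator m \<psi>2"
    and sup: "superadditive_on {0..} (\<lambda>x. gen_inv \<psi>2 (\<psi>1 x))"
    and "finite I" and u: "\<And>i. i \<in> I \<Longrightarrow> 0 \<le> u i \<and> u i \<le> 1"
  shows "psi_ext \<psi>1 (\<Sum>i\<in>I. gen_inv \<psi>1 (u i)) \<le> psi_ext \<psi>2 (\<Sum>i\<in>I. gen_inv \<psi>2 (u i))"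
proof (cases "\<exists>i\<in>I. gen_inv \<psi>1 (u i) = \<infinity>")
  case True
  then have "(\<Sum>i\<in>I. gen_inv \<psi>1 (u i)) = \<infinity>" using \<open>finite I\<close> by (simp add: sum_Pinfty)
  then show ?thesis
    using psi_ext_nonneg[OF ag2] by (simp add: psi_ext_def sum_nonneg gen_inv_nonneg)
next
  case False
  define a where "a i = real_of_ereal (gen_inv \<psi>1 (u i))" for i
  have a: "0 \<le> a i \<and> gen_inv \<psi>1 (u i) = ereal (a i) \<and> \<psi>1 (a i) = u i" if "i \<in> I" for i
  proof -
    have ne: "{x. 0 \<le> x \<and> \<psi>1 x \<le> u i} \<noteq> {}"
      using False that gen_inv_eq_PInf[of \<psi>1 "u i"] by auto
    have "u i \<le> 1" using u that by simp
    then obtain h where "0 \<le> h" "gen_inv \<psi>1 (u i) = ereal h" "\<psi>1 h = u i"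
      using gen_inv_eq_ereal[OF ag1 _ ne] by blast
    then show ?thesis by (simp add: a_def)
  qed
  define g where "g = (\<lambda>x. gen_inv \<psi>2 (\<psi>1 x))"
  have "0 \<le> (\<Sum>i\<in>I. a i)" using a by (simp add: sum_nonneg)
  have "(\<Sum>i\<in>I. gen_inv \<psi>2 (u i)) = (\<Sum>i\<in>I. g (a i))"
    using a by (simp add: g_def cong: sum.cong)
  also have "\<dots> \<le> g (\<Sum>i\<in>I. a i)"
    using \<open>finite I\<close> a by (intro superadditive_on_sum sup[folded g_def]) (auto simp: g_def gen_inv_nonneg)
  finally have "psi_ext \<psi>2 (g (\<Sum>i\<in>I. a i)) \<le> psi_ext \<psi>2 (\<Sum>i\<in>I. gen_inv \<psi>2 (u i))"
    by (rule psi_ext_antimono[OF ag2, rotated]) (simp add: sum_nonneg gen_inv_nonneg)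
  moreover have "psi_ext \<psi>2 (g (\<Sum>i\<in>I. a i)) = \<psi>1 (\<Sum>i\<in>I. a i)"
    unfolding g_def using arch_generatorD(3,4)[OF ag1 \<open>0 \<le> (\<Sum>i\<in>I. a i)\<close>]
    by (simp add: psi_ext_gen_inv[OF ag2])
  moreover have "psi_ext \<psi>1 (\<Sum>i\<in>I. gen_inv \<psi>1 (u i)) = \<psi>1 (\<Sum>i\<in>I. a i)"
    using a by (simp add: psi_ext_def cong: sum.cong)
  ultimately show ?thesis by simp
qed

lemma psi_ext_sum_gen_inv_le_of_log_convex:
  assumes ag1: "arch_generator m \<psi>1" and ag2: "arch_generator m \<psi>2"
    and sup: "superadditive_on {0..} (\<lambda>x. gen_inv \<psi>2 (\<psi>1 x))"
    and logc: "log_convex_on {0..} \<psi>1 \<or> log_convex_on {0..} \<psi>2"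
    and "finite I" and u: "\<And>i. i \<in> I \<Longrightarrow> 0 \<le> u i \<and> u i \<le> 1"
    and v: "\<And>i. i \<in> I \<Longrightarrow> 0 \<le> v i \<and> v i \<le> 1"
    and vu: "\<And>\<psi>. arch_generator m \<psi> \<Longrightarrow> log_convex_on {0..} \<psi> \<Longrightarrow>
      (\<Sum>i\<in>I. gen_inv \<psi> (v i)) \<le> (\<Sum>i\<in>I. gen_inv \<psi> (u i))"
  shows "psi_ext \<psi>1 (\<Sum>i\<in>I. gen_inv \<psi>1 (u i)) \<le> psi_ext \<psi>2 (\<Sum>i\<in>I. gen_inv \<psi>2 (v i))"
  using logc
proof
  assume "log_convex_on {0..} \<psi>1"
  have "psi_ext \<psi>1 (\<Sum>i\<in>I. gen_inv \<psi>1 (u i)) \<le> psi_ext \<psi>1 (\<Sum>i\<in>I. gen_inv \<psi>1 (v i))"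
    using vu[OF ag1 \<open>log_convex_on {0..} \<psi>1\<close>] by (intro psi_ext_antimono[OF ag1]) (simp_all add: sum_nonneg gen_inv_nonneg)
  also have "\<dots> \<le> psi_ext \<psi>2 (\<Sum>i\<in>I. gen_inv \<psi>2 (v i))"
    by (rule psi_ext_sum_gen_inv_le[OF ag1 ag2 sup \<open>finite I\<close> v])
  finally show ?thesis .
next
  assume "log_convex_on {0..} \<psi>2"
  have "psi_ext \<psi>1 (\<Sum>i\<in>I. gen_inv \<psi>1 (u i)) \<le> psi_ext \<psi>2 (\<Sum>i\<in>I. gen_inv \<psi>2 (u i))"
    by (rule psi_ext_sum_gen_inv_le[OF ag1 ag2 sup \<open>finite I\<close> u])
  also have "\<dots> \<le> psi_ext \<psi>2 (\<Sum>i\<in>I. gen_inv \<psi>2 (v i))"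
    using vu[OF ag2 \<open>log_convex_on {0..} \<psi>2\<close>]
    by (intro psi_ext_antimono[OF ag2]) (simp_all add: sum_nonneg gen_inv_nonneg)
  finally show ?thesis .
qed

lemma arch_survival_copula_Min_gt:
  assumes "arch_survival_copula M m Z Gbar \<psi>" and "0 < m"
  shows "measure M {\<omega>\<in>space M. Min ((\<lambda>i. Z i \<omega>) ` {..<m}) > x}
    = psi_ext \<psi> (\<Sum>i<m. gen_inv \<psi> (Gbar i x))"
proof -
  have "{\<omega>\<in>space M. Min ((\<lambda>i. Z i \<omega>) ` {..<m}) > x} = {\<omega>\<in>space M. \<forall>i<m. Z i \<omega> > x}"
    using \<open>0 < m\<close> by (subst Min_gr_iff) auto
  moreover have "measure M {\<omega>\<in>space M. \<forall>i<m. Z i \<omega> > x} = psi_ext \<psi> (\<Sum>i<m. gen_inv \<psi> (Gbar i x))"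
    using assms(1) unfolding arch_survival_copula_def by (auto dest: spec[of _ "\<lambda>_. x"])
  ultimately show ?thesis by simp
qed

lemma abs_cont_dfD:
  assumes "abs_cont_df F f"
  shows "\<And>x. 0 \<le> f x" "f integrable_on {0..}" "integral {0..} f = 1"
    "\<And>x. x < 0 \<Longrightarrow> F x = 0" "\<And>x. 0 \<le> x \<Longrightarrow> F x = integral {0..x} f"
  using assms unfolding abs_cont_df_def by auto

lemma abs_cont_df_integrable: "abs_cont_df F f \<Longrightarrow> 0 \<le> s \<Longrightarrow> f integrable_on {s..t}"
  by (rule integrable_on_subinterval[OF abs_cont_dfD(2)]) auto

lemma abs_cont_df_nonpos: "abs_cont_df F f \<Longrightarrow> x \<le> 0 \<Longrightarrow> F x = 0"
  using abs_cont_dfD(4,5)[of F f x] by (cases "x = 0") auto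

lemma abs_cont_df_diff:
  assumes a: "abs_cont_df F f" and "0 \<le> s" "s \<le> t"
  shows "F t - F s = integral {s..t} f"
proof -
  have "integral {0..s} f + integral {s..t} f = integral {0..t} f"
    using assms abs_cont_df_integrable[OF a] by (intro Henstock_Kurzweil_Integration.integral_combine) auto
  then show ?thesis using abs_cont_dfD(5)[OF a] assms by auto
qed

lemma abs_cont_df_nonneg: "abs_cont_df F f \<Longrightarrow> 0 \<le> F x"
  using abs_cont_dfD[of F f] by (cases "x < 0") (auto intro!: integral_nonneg abs_cont_df_integrable)

lemma abs_cont_df_le_1:
  assumes a: "abs_cont_df F f"
  shows "F x \<le> 1"
proof (cases "x < 0")
  case True
  then show ?thesis using abs_cont_dfD(4)[OF a] by simp
next
  case False
  have "integral {0..x} f \<le> integral {0..} f"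
    using abs_cont_dfD[OF a] abs_cont_df_integrable[OF a] by (intro integral_subset_le) auto
  then show ?thesis using abs_cont_dfD[OF a] False by simp
qed

lemma abs_cont_df_mono:
  assumes a: "abs_cont_df F f" and "s \<le> t"
  shows "F s \<le> F t"
proof (cases "s < 0")
  case True
  then show ?thesis using abs_cont_dfD(4)[OF a] abs_cont_df_nonneg[OF a] by simp
next
  case False
  have "0 \<le> integral {s..t} f"
    using abs_cont_dfD[OF a] abs_cont_df_integrable[OF a] False by (intro integral_nonneg) auto
  then show ?thesis using abs_cont_df_diff[OF a, of s t] False assms by simp
qed

lemma abs_cont_df_continuous_on:
  assumes a: "abs_cont_df F f" and "0 \<le> a"
  shows "continuous_on {a..b} F"
proof -
  have "continuous_on {0..max a b} (\<lambda>x. integral {0..x} f)"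
    by (intro indefinite_integral_continuous_1 abs_cont_df_integrable[OF a]) simp
  then have "continuous_on {a..b} (\<lambda>x. integral {0..x} f)"
    by (rule continuous_on_subset) (use assms in auto)
  then show ?thesis
    by (rule continuous_on_cong[THEN iffD1, rotated 2]) (use abs_cont_dfD(5)[OF a] assms in auto)
qed

lemma abs_cont_df_survival_diff:
  assumes "abs_cont_df F f" and "0 \<le> s" "s \<le> t"
  shows "(1 - F s) - (1 - F t) = integral {s..t} f \<and> f integrable_on {s..t}"
  using abs_cont_df_diff[OF assms] abs_cont_df_integrable[OF assms(1,2)] by simp

text \<open>Take the last point \<open>s\<^sub>0\<close> where \<open>P \<ge> Q\<close>: on \<open>(s\<^sub>0, b]\<close> the difference \<open>P - Q\<close> is
  negative, hence nondecreasing by the slope condition, which contradicts continuity at \<open>s\<^sub>0\<close>.\<close>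
lemma integral_comparison:
  fixes P Q p q :: "real \<Rightarrow> real"
  assumes "a \<le> b"
    and cP: "continuous_on {a..b} P" and cQ: "continuous_on {a..b} Q"
    and iP: "\<And>s t. a \<le> s \<Longrightarrow> s \<le> t \<Longrightarrow> t \<le> b \<Longrightarrow> P s - P t = integral {s..t} p \<and> p integrable_on {s..t}"
    and iQ: "\<And>s t. a \<le> s \<Longrightarrow> s \<le> t \<Longrightarrow> t \<le> b \<Longrightarrow> Q s - Q t = integral {s..t} q \<and> q integrable_on {s..t}"
    and "Q a \<le> P a"
    and slope: "\<And>s. a < s \<Longrightarrow> s \<le> b \<Longrightarrow> P s < Q s \<Longrightarrow> p s \<le> q s"
  shows "Q b \<le> P b"
proof (rule ccontr)
  define W where "W x = P x - Q x" for x
  assume "\<not> Q b \<le> P b"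
  then have Wb: "W b < 0" unfolding W_def by simp
  have cW: "continuous_on {a..b} W" unfolding W_def using cP cQ by (intro continuous_intros)
  define S where "S = {a..b} \<inter> W -` {0..}"
  have "closed S" unfolding S_def by (rule continuous_closed_preimage[OF cW]) auto
  then have "compact ({a..b} \<inter> S)" by (intro compact_Int_closed) auto
  then have "compact S" unfolding S_def by (simp add: Int_absorb1)
  moreover have "a \<in> S" using \<open>Q a \<le> P a\<close> \<open>a \<le> b\<close> unfolding S_def W_def by auto
  ultimately obtain s0 where s0: "s0 \<in> S" "\<And>y. y \<in> S \<Longrightarrow> y \<le> s0"
    using compact_attains_sup[of S] by blast
  have s0ab: "a \<le> s0" "s0 \<le> b" "0 \<le> W s0" using s0(1) unfolding S_def by auto
  have neg: "W y < 0" if "s0 < y" "y \<le> b" for y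
    using s0(2)[of y] that s0ab unfolding S_def by force
  have incr: "W y \<le> W b" if y: "s0 < y" "y \<le> b" for y
  proof -
    have "integral {y..b} p \<le> integral {y..b} q"
      using iP iQ slope neg s0ab y unfolding W_def by (intro integral_le) auto
    moreover have "P y - P b = integral {y..b} p" "Q y - Q b = integral {y..b} q"
      using iP iQ s0ab y by auto
    ultimately show ?thesis unfolding W_def by simp
  qed
  have "\<exists>x. s0 \<le> x \<and> x \<le> b \<and> W x = W b / 2"
    using Wb s0ab continuous_on_subset[OF cW, of "{s0..b}"] by (intro IVT2') auto
  then obtain x where x: "s0 \<le> x" "x \<le> b" "W x = W b / 2" by blast
  then have "x \<noteq> s0" using s0ab Wb by auto
  then show False using incr[of x] x Wb by simp
qed

lemma exp_decay_integral:
  fixes K c a s t :: real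
  assumes "s \<le> t"
  shows "K * exp (- c * (s - a)) - K * exp (- c * (t - a))
      = integral {s..t} (\<lambda>x. c * (K * exp (- c * (x - a))))
    \<and> (\<lambda>x. c * (K * exp (- c * (x - a)))) integrable_on {s..t}"
proof -
  have "((\<lambda>x. c * (K * exp (- c * (x - a)))) has_integral
      (- K * exp (- c * (t - a)) - - K * exp (- c * (s - a)))) {s..t}"
    by (intro fundamental_theorem_of_calculus[OF assms])
       (auto intro!: derivative_eq_intros simp: has_real_derivative_iff_has_vector_derivative[symmetric])
  then show ?thesis by (auto dest: integral_unique has_integral_integrable)
qed

lemma density_le_of_hazard_le: "F x < 1 \<Longrightarrow> hazard F f x \<le> ereal c \<Longrightarrow> f x \<le> c * (1 - F x)"
  by (simp add: hazard_def pos_divide_le_eq)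

lemma density_ge_of_hazard_ge: "F x < 1 \<Longrightarrow> ereal c \<le> hazard F f x \<Longrightarrow> c * (1 - F x) \<le> f x"
  by (simp add: hazard_def pos_le_divide_eq)

lemma less_1_of_hazard_le: "hazard F f x \<le> ereal c \<Longrightarrow> F x < 1"
  by (cases "F x < 1") (simp_all add: hazard_def)

lemma survival_ge_exp_of_hazard_le:
  assumes F: "abs_cont_df F f" and "0 \<le> a" "a \<le> b" "0 \<le> c"
    and haz: "\<And>s. a < s \<Longrightarrow> s \<le> b \<Longrightarrow> hazard F f s \<le> ereal c"
  shows "(1 - F a) * exp (- c * (b - a)) \<le> 1 - F b"
proof -
  define E where "E x = (1 - F a) * exp (- c * (x - a))" for x
  have "E b \<le> 1 - F b"
  proof (rule integral_comparison[where p = f and q = "\<lambda>x. c * E x", OF \<open>a \<le> b\<close>])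
    show "continuous_on {a..b} (\<lambda>x. 1 - F x)"
      using abs_cont_df_continuous_on[OF F \<open>0 \<le> a\<close>] by (intro continuous_intros)
    fix s assume s: "a < s" "s \<le> b" "1 - F s < E s"
    have "f s \<le> c * (1 - F s)" using haz[OF s(1,2)] less_1_of_hazard_le density_le_of_hazard_le by blast
    also have "\<dots> \<le> c * E s" using s \<open>0 \<le> c\<close> by (intro mult_left_mono) auto
    finally show "f s \<le> c * E s" .
  qed (use abs_cont_df_survival_diff[OF F] exp_decay_integral \<open>0 \<le> a\<close> in
        \<open>auto simp: E_def intro!: continuous_intros\<close>)
  then show ?thesis unfolding E_def by simp
qed

lemma survival_le_exp_of_hazard_ge:
  assumes F: "abs_cont_df F f" and "0 \<le> a" "a \<le> b" "0 \<le> c"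
    and haz: "\<And>s. a < s \<Longrightarrow> s \<le> b \<Longrightarrow> F s < 1 \<Longrightarrow> ereal c \<le> hazard F f s"
  shows "1 - F b \<le> (1 - F a) * exp (- c * (b - a))"
proof -
  define E where "E x = (1 - F a) * exp (- c * (x - a))" for x
  have "1 - F b \<le> E b"
  proof (rule integral_comparison[where q = f and p = "\<lambda>x. c * E x", OF \<open>a \<le> b\<close>])
    show "continuous_on {a..b} (\<lambda>x. 1 - F x)"
      using abs_cont_df_continuous_on[OF F \<open>0 \<le> a\<close>] by (intro continuous_intros)
    fix s assume s: "a < s" "s \<le> b" "E s < 1 - F s"
    have "0 \<le> E s" unfolding E_def using abs_cont_df_le_1[OF F, of a] by simp
    then have "F s < 1" using s by simp
    have "c * E s \<le> c * (1 - F s)" using s \<open>0 \<le> c\<close> by (intro mult_left_mono) auto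
    also have "\<dots> \<le> f s" using haz[OF s(1,2) \<open>F s < 1\<close>] density_ge_of_hazard_ge \<open>F s < 1\<close> by blast
    finally show "c * E s \<le> f s" .
  qed (use abs_cont_df_survival_diff[OF F] exp_decay_integral \<open>0 \<le> a\<close> in
        \<open>auto simp: E_def intro!: continuous_intros\<close>)
  then show ?thesis unfolding E_def by simp
qed

lemma survival_le_of_hazard_le:
  assumes F1: "abs_cont_df F1 f1" and F2: "abs_cont_df F2 f2"
    and haz: "\<forall>x>0. hazard F1 f1 x \<le> hazard F2 f2 x" and "0 \<le> t"
  shows "1 - F2 t \<le> 1 - F1 t"
proof (rule integral_comparison[where p = f1 and q = f2, OF \<open>0 \<le> t\<close>])
  show "continuous_on {0..t} (\<lambda>x. 1 - F1 x)" "continuous_on {0..t} (\<lambda>x. 1 - F2 x)"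
    using abs_cont_df_continuous_on[OF F1, of 0] abs_cont_df_continuous_on[OF F2, of 0]
    by (auto intro: continuous_intros)
  show "1 - F2 0 \<le> 1 - F1 0" using abs_cont_df_nonpos[OF F1] abs_cont_df_nonpos[OF F2] by simp
  fix s assume s: "0 < s" "s \<le> t" "1 - F1 s < 1 - F2 s"
  have F2s: "F2 s < 1" using s abs_cont_df_le_1[OF F1, of s] by simp
  define r where "r = f2 s / (1 - F2 s)"
  have "hazard F1 f1 s \<le> hazard F2 f2 s" using haz s by simp
  also have "\<dots> = ereal r" using F2s by (simp add: hazard_def r_def)
  finally have "f1 s \<le> r * (1 - F1 s)" using less_1_of_hazard_le density_le_of_hazard_le by blast
  also have "\<dots> \<le> r * (1 - F2 s)"
    using s F2s abs_cont_dfD(1)[OF F2, of s] by (intro mult_left_mono) (auto simp: r_def)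
  finally show "f1 s \<le> f2 s" using F2s by (simp add: r_def)
qed (use abs_cont_df_survival_diff[OF F1] abs_cont_df_survival_diff[OF F2] in auto)

text \<open>The level is the value at \<open>bp\<close> (resp. \<open>bq\<close>) of whichever hazard rate is increasing.\<close>
lemma hazard_separating_level:
  assumes Fp: "abs_cont_df Fp fp" and Fq: "abs_cont_df Fq fq"
    and haz: "\<forall>x>0. hazard Fp fp x \<le> hazard Fq fq x"
    and incr: "mono_on {0<..} (hazard Fp fp) \<or> mono_on {0<..} (hazard Fq fq)"
    and "0 < bp" "bp \<le> bq" and "Fq bq < 1"
  obtains c where "0 \<le> c"
    and "\<And>s. 0 < s \<Longrightarrow> s \<le> bp \<Longrightarrow> hazard Fp fp s \<le> ereal c"
    and "\<And>s. bq \<le> s \<Longrightarrow> ereal c \<le> hazard Fq fq s"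
proof (cases "mono_on {0<..} (hazard Fp fp)")
  case True
  have "Fq bp < 1" using abs_cont_df_mono[OF Fq \<open>bp \<le> bq\<close>] \<open>Fq bq < 1\<close> by simp
  have "hazard Fp fp bp \<le> hazard Fq fq bp" using haz \<open>0 < bp\<close> by simp
  also have "\<dots> = ereal (fq bp / (1 - Fq bp))" using \<open>Fq bp < 1\<close> by (simp add: hazard_def)
  finally have "Fp bp < 1" by (rule less_1_of_hazard_le)
  define c where "c = fp bp / (1 - Fp bp)"
  have hc: "hazard Fp fp bp = ereal c" using \<open>Fp bp < 1\<close> by (simp add: hazard_def c_def)
  show ?thesis
  proof (rule that[of c])
    show "0 \<le> c" unfolding c_def using \<open>Fp bp < 1\<close> abs_cont_dfD(1)[OF Fp, of bp] by simp
    show "hazard Fp fp s \<le> ereal c" if "0 < s" "s \<le> bp" for s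
      using mono_onD[OF True, of s bp] that hc \<open>0 < bp\<close> by simp
    show "ereal c \<le> hazard Fq fq s" if "bq \<le> s" for s
    proof -
      have "0 < s" using that \<open>0 < bp\<close> \<open>bp \<le> bq\<close> by simp
      have "ereal c \<le> hazard Fp fp s"
        using mono_onD[OF True, of bp s] hc that \<open>0 < bp\<close> \<open>bp \<le> bq\<close> by simp
      also have "\<dots> \<le> hazard Fq fq s" using haz \<open>0 < s\<close> by simp
      finally show ?thesis .
    qed
  qed
next
  case False
  then have mq: "mono_on {0<..} (hazard Fq fq)" using incr by simp
  define c where "c = fq bq / (1 - Fq bq)"
  have hc: "hazard Fq fq bq = ereal c" using \<open>Fq bq < 1\<close> by (simp add: hazard_def c_def)
  show ?thesis
  proof (rule that[of c])
    show "0 \<le> c" unfolding c_def using \<open>Fq bq < 1\<close> abs_cont_dfD(1)[OF Fq, of bq] by simp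
    show "ereal c \<le> hazard Fq fq s" if "bq \<le> s" for s
      using mono_onD[OF mq, of bq s] that hc \<open>0 < bp\<close> \<open>bp \<le> bq\<close> by simp
    show "hazard Fp fp s \<le> ereal c" if "0 < s" "s \<le> bp" for s
    proof -
      have "hazard Fp fp s \<le> hazard Fq fq s" using haz \<open>0 < s\<close> by simp
      also have "\<dots> \<le> ereal c"
        using mono_onD[OF mq, of s bq] hc that \<open>bp \<le> bq\<close> by simp
      finally show ?thesis .
    qed
  qed
qed

text \<open>By convexity the left chord is at least as steep as the right one.\<close>
lemma convex_on_weighted_drop_le:
  fixes C :: "real \<Rightarrow> real"
  assumes cvx: "convex_on I C" and "p1 \<in> I" "q2 \<in> I"
    and ord: "p1 \<le> q1" "q1 \<le> p2" "p2 \<le> q2"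
    and drop1: "0 < C p1 - C q1" and "0 < np" "0 < nq"
    and drops: "np * (C p1 - C q1) \<le> nq * (C p2 - C q2)"
  shows "np * (q1 - p1) \<le> nq * (q2 - p2)"
proof -
  define w1 where "w1 = q1 - p1"
  define w2 where "w2 = q2 - p2"
  define d1 where "d1 = C p1 - C q1"
  define d2 where "d2 = C p2 - C q2"
  have "0 < np * d1" using \<open>0 < np\<close> drop1 by (simp add: d1_def)
  then have "0 < nq * d2" using drops by (simp add: d1_def d2_def)
  then have "0 < d2" using \<open>0 < nq\<close> by (simp add: zero_less_mult_iff)
  have w: "0 < w1" "0 < w2"
    using drop1 \<open>0 < d2\<close> ord unfolding w1_def w2_def d2_def by (auto simp: less_le)
  have "p1 < q1" "p2 < q2" using w unfolding w1_def w2_def by simp_all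
  have "(C p1 - C q1) / (p1 - q1) \<le> (C p1 - C q2) / (p1 - q2)"
    using assms(2,3) ord \<open>p1 < q1\<close> \<open>p2 < q2\<close> by (intro convex_on_slope_le(1)[OF cvx]) auto
  also have "\<dots> \<le> (C p2 - C q2) / (p2 - q2)"
    using assms(2,3) ord \<open>p1 < q1\<close> \<open>p2 < q2\<close> by (intro convex_on_slope_le(2)[OF cvx]) auto
  finally have "(C p1 - C q1) / (p1 - q1) \<le> (C p2 - C q2) / (p2 - q2)" .
  moreover have "(C p1 - C q1) / (p1 - q1) = - (d1 / w1)" "(C p2 - C q2) / (p2 - q2) = - (d2 / w2)"
    unfolding d1_def d2_def w1_def w2_def by (metis minus_diff_eq minus_divide_right)+
  ultimately have "d2 * w1 \<le> d1 * w2" using w by (simp add: divide_simps)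
  then have "np * w1 * d2 \<le> np * d1 * w2" using \<open>0 < np\<close> by (simp add: mult_left_mono ac_simps)
  also have "\<dots> \<le> nq * d2 * w2" using drops w by (intro mult_right_mono) (auto simp: d1_def d2_def)
  finally have "np * w1 * d2 \<le> nq * w2 * d2" by (simp add: ac_simps)
  then show ?thesis using \<open>0 < d2\<close> by (simp add: w1_def w2_def)
qed

lemma gen_inv_log_convex_exchange:
  fixes np nq :: nat
  assumes ag: "arch_generator m \<psi>" and lc: "log_convex_on {0..} \<psi>"
    and ord: "0 < Aq" "Aq \<le> Bq" "Bq \<le> Bp" "Bp < Ap" "Ap \<le> 1" and "0 < np" "0 < nq"
    and trade: "np * (ln Ap - ln Bp) \<le> nq * (ln Bq - ln Aq)"
  shows "(\<Sum>i<np. gen_inv \<psi> Bp) + (\<Sum>i<nq. gen_inv \<psi> Bq)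
       \<le> (\<Sum>i<np. gen_inv \<psi> Ap) + (\<Sum>i<nq. gen_inv \<psi> Aq)"
proof -
  have "0 < Bq" "0 < Bp" "0 < Ap" "Aq \<le> 1" "Bq \<le> 1" "Bp \<le> 1" using ord by linarith+
  obtain hAp where hAp: "0 \<le> hAp" "gen_inv \<psi> Ap = ereal hAp" "\<psi> hAp = Ap"
    by (rule gen_inv_pos_eq_ereal[OF ag \<open>0 < Ap\<close> \<open>Ap \<le> 1\<close>])
  obtain hAq where hAq: "gen_inv \<psi> Aq = ereal hAq" "\<psi> hAq = Aq"
    by (rule gen_inv_pos_eq_ereal[OF ag \<open>0 < Aq\<close> \<open>Aq \<le> 1\<close>])
  obtain hBp where hBp: "gen_inv \<psi> Bp = ereal hBp" "\<psi> hBp = Bp"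
    by (rule gen_inv_pos_eq_ereal[OF ag \<open>0 < Bp\<close> \<open>Bp \<le> 1\<close>])
  obtain hBq where hBq: "gen_inv \<psi> Bq = ereal hBq" "\<psi> hBq = Bq"
    by (rule gen_inv_pos_eq_ereal[OF ag \<open>0 < Bq\<close> \<open>Bq \<le> 1\<close>])
  have cvx: "convex_on {0..} (\<lambda>x. ln (\<psi> x))" using lc unfolding log_convex_on_def by simp
  have "real np * (hBp - hAp) \<le> real nq * (hAq - hBq)"
  proof (rule convex_on_weighted_drop_le[OF cvx])
    show "hAp \<le> hBp" "hBp \<le> hBq" "hBq \<le> hAq"
      using gen_inv_antimono[of Bp Ap \<psi>] gen_inv_antimono[of Bq Bp \<psi>] gen_inv_antimono[of Aq Bq \<psi>]
        ord hAp hAq hBp hBq by simp_all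
    then show "hAp \<in> {0..}" "hAq \<in> {0..}" using \<open>0 \<le> hAp\<close> by simp_all
    show "0 < ln (\<psi> hAp) - ln (\<psi> hBp)" using hAp hBp \<open>0 < Bp\<close> \<open>Bp < Ap\<close> by simp
    show "real np * (ln (\<psi> hAp) - ln (\<psi> hBp)) \<le> real nq * (ln (\<psi> hBq) - ln (\<psi> hAq))"
      using trade hAp hAq hBp hBq by simp
  qed (use \<open>0 < np\<close> \<open>0 < nq\<close> in simp_all)
  then show ?thesis using hAp hAq hBp hBq by (simp add: algebra_simps)
qed

lemma ln_survival_trade:
  fixes ap aq bp bq np nq :: real
  assumes Fp: "abs_cont_df Fp fp" and Fq: "abs_cont_df Fq fq"
    and haz: "\<forall>x>0. hazard Fp fp x \<le> hazard Fq fq x"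
    and incr: "mono_on {0<..} (hazard Fp fp) \<or> mono_on {0<..} (hazard Fq fq)"
    and ord: "0 \<le> ap" "ap \<le> bp" "0 < bp" "bp \<le> bq" "bq \<le> aq" and "0 \<le> np" "0 \<le> nq"
    and sum: "np * bp + nq * bq \<le> np * ap + nq * aq" and "Fq aq < 1"
  defines "Ap \<equiv> 1 - Fp ap" and "Aq \<equiv> 1 - Fq aq" and "Bp \<equiv> 1 - Fp bp" and "Bq \<equiv> 1 - Fq bq"
  shows "np * (ln Ap - ln Bp) \<le> nq * (ln Bq - ln Aq)"
proof -
  have "Fq bq \<le> Fq aq" using abs_cont_df_mono[OF Fq \<open>bq \<le> aq\<close>] .
  then have "Fq bq < 1" using \<open>Fq aq < 1\<close> by simp
  then obtain c where "0 \<le> c"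
    and below: "\<And>s. 0 < s \<Longrightarrow> s \<le> bp \<Longrightarrow> hazard Fp fp s \<le> ereal c"
    and above: "\<And>s. bq \<le> s \<Longrightarrow> ereal c \<le> hazard Fq fq s"
    using hazard_separating_level[OF Fp Fq haz incr \<open>0 < bp\<close> \<open>bp \<le> bq\<close>] by blast
  have "1 - Fq bp \<le> 1 - Fp bp" using \<open>0 < bp\<close> by (intro survival_le_of_hazard_le[OF Fp Fq haz]) auto
  then have "0 < Aq" "Aq \<le> Bq" "Bq \<le> Bp" "Bp \<le> Ap"
    using \<open>Fq aq < 1\<close> \<open>Fq bq \<le> Fq aq\<close> abs_cont_df_mono[OF Fq \<open>bp \<le> bq\<close>]
      abs_cont_df_mono[OF Fp \<open>ap \<le> bp\<close>]
    unfolding Ap_def Aq_def Bp_def Bq_def by simp_all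
  then have "0 < Bq" "0 < Bp" "0 < Ap" by simp_all
  have "Ap * exp (- c * (bp - ap)) \<le> Bp" unfolding Ap_def Bp_def
    using ord below \<open>0 \<le> c\<close> by (intro survival_ge_exp_of_hazard_le[OF Fp]) auto
  then have "ln (Ap * exp (- c * (bp - ap))) \<le> ln Bp" using \<open>0 < Ap\<close> \<open>0 < Bp\<close> by simp
  then have gain: "ln Ap - ln Bp \<le> c * (bp - ap)" using \<open>0 < Ap\<close> by (simp add: ln_mult)
  have "Aq \<le> Bq * exp (- c * (aq - bq))" unfolding Aq_def Bq_def
    using ord above \<open>0 \<le> c\<close> by (intro survival_le_exp_of_hazard_ge[OF Fq]) auto
  then have "ln Aq \<le> ln (Bq * exp (- c * (aq - bq)))" using \<open>0 < Aq\<close> \<open>0 < Bq\<close> by simp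
  then have loss: "c * (aq - bq) \<le> ln Bq - ln Aq" using \<open>0 < Bq\<close> by (simp add: ln_mult)
  have "np * (ln Ap - ln Bp) \<le> c * (np * (bp - ap))"
    using mult_left_mono[OF gain \<open>0 \<le> np\<close>] by (simp add: ac_simps)
  also have "\<dots> \<le> c * (nq * (aq - bq))"
    using sum \<open>0 \<le> c\<close> by (intro mult_left_mono) (auto simp: algebra_simps)
  also have "\<dots> \<le> nq * (ln Bq - ln Aq)"
    using mult_left_mono[OF loss \<open>0 \<le> nq\<close>] by (simp add: ac_simps)
  finally show ?thesis .
qed

lemma two_group_sum_gen_inv_le:
  fixes ap aq bp bq :: real and np nq :: nat
  assumes Fp: "abs_cont_df Fp fp" and Fq: "abs_cont_df Fq fq"
    and haz: "\<forall>x>0. hazard Fp fp x \<le> hazard Fq fq x"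
    and incr: "mono_on {0<..} (hazard Fp fp) \<or> mono_on {0<..} (hazard Fq fq)"
    and pos: "0 < ap" "0 < bp" and ord: "bp \<le> bq" "bq \<le> aq" and "0 < np" "0 < nq"
    and sum: "np * bp + nq * bq \<le> np * ap + nq * aq"
    and ag: "arch_generator m \<psi>" and lc: "log_convex_on {0..} \<psi>"
  defines "Ap \<equiv> 1 - Fp ap" and "Aq \<equiv> 1 - Fq aq" and "Bp \<equiv> 1 - Fp bp" and "Bq \<equiv> 1 - Fq bq"
  shows "(\<Sum>i<np. gen_inv \<psi> Bp) + (\<Sum>i<nq. gen_inv \<psi> Bq)
       \<le> (\<Sum>i<np. gen_inv \<psi> Ap) + (\<Sum>i<nq. gen_inv \<psi> Aq)"
proof -
  have "Aq \<le> Bq" unfolding Aq_def Bq_def using abs_cont_df_mono[OF Fq \<open>bq \<le> aq\<close>] by simp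
  consider "Ap \<le> Bp" | "Aq \<le> 0" | "Bp < Ap" "0 < Aq" by fastforce
  then show ?thesis
  proof cases
    case 1
    then show ?thesis using \<open>Aq \<le> Bq\<close> by (intro add_mono sum_mono gen_inv_antimono) auto
  next
    case 2
    have "{x. 0 \<le> x \<and> \<psi> x \<le> Aq} = {}" using lc 2 unfolding log_convex_on_def by force
    then have "(\<Sum>i<nq. gen_inv \<psi> Aq) = \<infinity>" using \<open>0 < nq\<close> by (auto simp: gen_inv_eq_PInf sum_Pinfty)
    then show ?thesis by (simp add: sum_nonneg gen_inv_nonneg)
  next
    case 3
    have "ap < bp" using 3 abs_cont_df_mono[OF Fp, of bp ap] unfolding Ap_def Bp_def by force
    have "np * (ln Ap - ln Bp) \<le> nq * (ln Bq - ln Aq)"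
      using 3 pos ord sum \<open>ap < bp\<close> unfolding Ap_def Aq_def Bp_def Bq_def
      by (intro ln_survival_trade[OF Fp Fq haz incr]) auto
    moreover have "1 - Fq bp \<le> 1 - Fp bp"
      using \<open>0 < bp\<close> by (intro survival_le_of_hazard_le[OF Fp Fq haz]) auto
    then have "Bq \<le> Bp" using abs_cont_df_mono[OF Fq \<open>bp \<le> bq\<close>] unfolding Bq_def Bp_def by simp
    moreover have "Ap \<le> 1" unfolding Ap_def using abs_cont_df_nonneg[OF Fp] by simp
    ultimately show ?thesis
      using 3 \<open>Aq \<le> Bq\<close> \<open>0 < np\<close> \<open>0 < nq\<close> by (intro gen_inv_log_convex_exchange[OF ag lc]) auto
  qed
qed

lemma weak_majorizes_two_blocks:
  fixes a b c d :: real and n1 n2 :: nat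
  assumes "a \<le> b" "c \<le> d" "0 < n2"
    and wm: "weak_majorizes (replicate n1 a @ replicate n2 b) (replicate n1 c @ replicate n2 d)"
  shows "d \<le> b" "n1 * c + n2 * d \<le> n1 * a + n2 * b"
proof -
  have "sort (replicate n1 a @ replicate n2 b) = replicate n1 a @ replicate n2 b"
       "sort (replicate n1 c @ replicate n2 d) = replicate n1 c @ replicate n2 d"
    using assms(1,2) by (auto intro: sorted_sort_id simp: sorted_append)
  then have tails: "sum_list (drop l (replicate n1 c @ replicate n2 d))
      \<le> sum_list (drop l (replicate n1 a @ replicate n2 b))" if "l < n1 + n2" for l
    using wm that unfolding weak_majorizes_def by simp
  show "n1 * c + n2 * d \<le> n1 * a + n2 * b"
    using tails[of 0] \<open>0 < n2\<close> by (simp add: sum_list_replicate)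
  show "d \<le> b"
    using tails[of n1] \<open>0 < n2\<close> by (simp add: sum_list_replicate)
qed

lemma weak_majorizes_append_swap:
  assumes "weak_majorizes (xs @ ys) (us @ vs)"
  shows "weak_majorizes (ys @ xs) (vs @ us)"
proof -
  have "sort (ys @ xs) = sort (xs @ ys)" for xs ys :: "real list"
    by (rule properties_for_sort) (auto simp: add.commute)
  then show ?thesis using assms unfolding weak_majorizes_def by simp
qed

lemma sum_lessThan_two_blocks:
  fixes g :: "'x \<Rightarrow> 'b::comm_monoid_add" and n1 n2 :: nat
  shows "(\<Sum>i<n1+n2. g (if i < n1 then u else v)) = (\<Sum>i<n1. g u) + (\<Sum>i<n2. g v)"
  by (induction n2) (simp_all add: add.assoc)

lemma sum_gen_inv_survival_le_of_majorizes:
  assumes F1: "abs_cont_df F1 f1" and F2: "abs_cont_df F2 f2"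
    and haz: "\<forall>x>0. hazard F1 f1 x \<le> hazard F2 f2 x"
    and incr: "mono_on {0<..} (hazard F1 f1) \<or> mono_on {0<..} (hazard F2 f2)"
    and pos: "0 < la1" "0 < mu1" and ord: "la1 \<le> la2" "mu1 \<le> mu2" and "0 < n1" "0 < n2"
    and maj: "weak_majorizes (replicate n1 la1 @ replicate n2 la2) (replicate n1 mu1 @ replicate n2 mu2)"
    and ag: "arch_generator m \<psi>" and lc: "log_convex_on {0..} \<psi>"
    and "0 < x"
  shows "(\<Sum>i<n1. gen_inv \<psi> (1 - F1 (mu1 * x))) + (\<Sum>i<n2. gen_inv \<psi> (1 - F2 (mu2 * x)))
       \<le> (\<Sum>i<n1. gen_inv \<psi> (1 - F1 (la1 * x))) + (\<Sum>i<n2. gen_inv \<psi> (1 - F2 (la2 * x)))"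
proof (rule two_group_sum_gen_inv_le[OF F1 F2 haz incr _ _ _ _ \<open>0 < n1\<close> \<open>0 < n2\<close> _ ag lc])
  have "mu2 \<le> la2" and sum: "n1 * mu1 + n2 * mu2 \<le> n1 * la1 + n2 * la2"
    using weak_majorizes_two_blocks[OF ord \<open>0 < n2\<close> maj] by auto
  then show "mu2 * x \<le> la2 * x" using \<open>0 < x\<close> by simp
  show "n1 * (mu1 * x) + n2 * (mu2 * x) \<le> n1 * (la1 * x) + n2 * (la2 * x)"
    using mult_right_mono[OF sum, of x] \<open>0 < x\<close> by (simp add: algebra_simps)
qed (use pos ord \<open>0 < x\<close> in auto)

lemma sum_gen_inv_survival_le:
  fixes n1 n2 :: nat
  assumes F1: "abs_cont_df F1 f1" and F2: "abs_cont_df F2 f2"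
    and "0 < n1" "0 < n2" and pos: "0 < la1" "0 < la2" "0 < mu1" "0 < mu2"
    and incr: "mono_on {0<..} (hazard F1 f1) \<or> mono_on {0<..} (hazard F2 f2)"
    and cases:
      "((\<forall>x>0. hazard F1 f1 x \<le> hazard F2 f2 x) \<and> la1 \<le> la2 \<and> mu1 \<le> mu2) \<or>
       ((\<forall>x>0. hazard F1 f1 x \<ge> hazard F2 f2 x) \<and> la1 \<ge> la2 \<and> mu1 \<ge> mu2)"
    and maj: "weak_majorizes (replicate n1 la1 @ replicate n2 la2) (replicate n1 mu1 @ replicate n2 mu2)"
    and ag: "arch_generator m \<psi>" and lc: "log_convex_on {0..} \<psi>"
  shows "(\<Sum>i<n1+n2. gen_inv \<psi> (1 - (if i < n1 then F1 (mu1 * x) else F2 (mu2 * x))))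
       \<le> (\<Sum>i<n1+n2. gen_inv \<psi> (1 - (if i < n1 then F1 (la1 * x) else F2 (la2 * x))))"
proof (cases "0 < x")
  case False
  then have "la1 * x \<le> 0" "la2 * x \<le> 0" "mu1 * x \<le> 0" "mu2 * x \<le> 0"
    using pos by (simp_all add: mult_nonneg_nonpos)
  then show ?thesis by (simp add: abs_cont_df_nonpos[OF F1] abs_cont_df_nonpos[OF F2] cong: if_cong)
next
  case True
  have "(\<Sum>i<n1. gen_inv \<psi> (1 - F1 (mu1 * x))) + (\<Sum>i<n2. gen_inv \<psi> (1 - F2 (mu2 * x)))
     \<le> (\<Sum>i<n1. gen_inv \<psi> (1 - F1 (la1 * x))) + (\<Sum>i<n2. gen_inv \<psi> (1 - F2 (la2 * x)))"
    using cases
  proof (elim disjE conjE)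
    assume "\<forall>x>0. hazard F1 f1 x \<le> hazard F2 f2 x" "la1 \<le> la2" "mu1 \<le> mu2"
    then show ?thesis
      by (intro sum_gen_inv_survival_le_of_majorizes[OF F1 F2 _ incr pos(1,3) _ _ \<open>0 < n1\<close> \<open>0 < n2\<close>
            maj ag lc True])
  next
    assume "\<forall>x>0. hazard F2 f2 x \<le> hazard F1 f1 x" "la2 \<le> la1" "mu2 \<le> mu1"
    moreover have "mono_on {0<..} (hazard F2 f2) \<or> mono_on {0<..} (hazard F1 f1)" using incr by blast
    ultimately have "(\<Sum>i<n2. gen_inv \<psi> (1 - F2 (mu2 * x))) + (\<Sum>i<n1. gen_inv \<psi> (1 - F1 (mu1 * x)))
      \<le> (\<Sum>i<n2. gen_inv \<psi> (1 - F2 (la2 * x))) + (\<Sum>i<n1. gen_inv \<psi> (1 - F1 (la1 * x)))"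
      by (intro sum_gen_inv_survival_le_of_majorizes[OF F2 F1 _ _ pos(2,4) _ _ \<open>0 < n2\<close> \<open>0 < n1\<close>
            weak_majorizes_append_swap[OF maj] ag lc True])
    then show ?thesis by (simp add: add.commute)
  qed
  then show ?thesis by (simp only: sum_lessThan_two_blocks[where g = "\<lambda>t. gen_inv \<psi> (1 - t)"])
qed

theorem theorem3p8:
  fixes M :: "'a measure" and N :: "'b measure"
    and X :: "nat \<Rightarrow> 'a \<Rightarrow> real" and Y :: "nat \<Rightarrow> 'b \<Rightarrow> real"
    and n1 n2 :: nat
    and F1 F2 f1 f2 \<psi>1 \<psi>2 :: "real \<Rightarrow> real"
    and la1 la2 mu1 mu2 :: real
  defines "n \<equiv> n1 + n2"
  assumes n1: "1 \<le> n1" and n2: "1 \<le> n2"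
    and pos: "0 < la1" "0 < la2" "0 < mu1" "0 < mu2"
    and F1: "abs_cont_df F1 f1" and F2: "abs_cont_df F2 f2"
    and M: "prob_space M" and N: "prob_space N"
    and Xmeas: "\<And>i. i < n \<Longrightarrow> X i \<in> borel_measurable M"
    and Ymeas: "\<And>i. i < n \<Longrightarrow> Y i \<in> borel_measurable N"
    and Xnn: "\<And>i \<omega>. i < n \<Longrightarrow> \<omega> \<in> space M \<Longrightarrow> 0 \<le> X i \<omega>"
    and Ynn: "\<And>i \<omega>. i < n \<Longrightarrow> \<omega> \<in> space N \<Longrightarrow> 0 \<le> Y i \<omega>"
    and Xmarg: "\<And>i x. i < n \<Longrightarrow>
        measure M {\<omega>\<in>space M. X i \<omega> \<le> x} = (if i < n1 then F1 (la1 * x) else F2 (la2 * x))"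
    and Ymarg: "\<And>i x. i < n \<Longrightarrow>
        measure N {\<omega>\<in>space N. Y i \<omega> \<le> x} = (if i < n1 then F1 (mu1 * x) else F2 (mu2 * x))"
    and gen1: "arch_generator n \<psi>1" and gen2: "arch_generator n \<psi>2"
    and Xcop: "arch_survival_copula M n X
        (\<lambda>i x. 1 - (if i < n1 then F1 (la1 * x) else F2 (la2 * x))) \<psi>1"
    and Ycop: "arch_survival_copula N n Y
        (\<lambda>i x. 1 - (if i < n1 then F1 (mu1 * x) else F2 (mu2 * x))) \<psi>2"
    and sup: "superadditive_on {0..} (\<lambda>x. gen_inv \<psi>2 (\<psi>1 x))"
    and logc: "log_convex_on {0..} \<psi>1 \<or> log_convex_on {0..} \<psi>2"
    and ifr: "mono_on {0<..} (hazard F1 f1) \<or> mono_on {0<..} (hazard F2 f2)"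
    and cases:
      "((\<forall>x>0. hazard F1 f1 x \<le> hazard F2 f2 x) \<and> n1 \<le> n2 \<and> la1 \<le> la2 \<and> mu1 \<le> mu2) \<or>
       ((\<forall>x>0. hazard F1 f1 x \<ge> hazard F2 f2 x) \<and> n1 \<ge> n2 \<and> la1 \<ge> la2 \<and> mu1 \<ge> mu2)"
    and maj: "weak_majorizes (replicate n1 la1 @ replicate n2 la2) (replicate n1 mu1 @ replicate n2 mu2)"
  shows "\<forall>x. measure M {\<omega>\<in>space M. Min ((\<lambda>i. X i \<omega>) ` {..<n}) > x}
           \<le> measure N {\<omega>\<in>space N. Min ((\<lambda>i. Y i \<omega>) ` {..<n}) > x}"
proof
  fix x
  define U where "U i = 1 - (if i < n1 then F1 (la1 * x) else F2 (la2 * x))" for i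
  define V where "V i = 1 - (if i < n1 then F1 (mu1 * x) else F2 (mu2 * x))" for i
  have "0 < n" using n1 unfolding n_def by simp
  have "psi_ext \<psi>1 (\<Sum>i<n. gen_inv \<psi>1 (U i)) \<le> psi_ext \<psi>2 (\<Sum>i<n. gen_inv \<psi>2 (V i))"
  proof (rule psi_ext_sum_gen_inv_le_of_log_convex[OF gen1 gen2 sup logc finite_lessThan])
    show "(\<Sum>i<n. gen_inv \<psi> (V i)) \<le> (\<Sum>i<n. gen_inv \<psi> (U i))"
      if "arch_generator n \<psi>" "log_convex_on {0..} \<psi>" for \<psi>
      unfolding U_def V_def n_def using n1 n2 cases
      by (intro sum_gen_inv_survival_le[OF F1 F2 _ _ pos ifr _ maj that]) auto
  qed (use abs_cont_df_nonneg[OF F1] abs_cont_df_nonneg[OF F2] abs_cont_df_le_1[OF F1]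
      abs_cont_df_le_1[OF F2] in \<open>auto simp: U_def V_def\<close>)
  then show "measure M {\<omega>\<in>space M. Min ((\<lambda>i. X i \<omega>) ` {..<n}) > x}
           \<le> measure N {\<omega>\<in>space N. Min ((\<lambda>i. Y i \<omega>) ` {..<n}) > x}"
    using arch_survival_copula_Min_gt[OF Xcop \<open>0 < n\<close>] arch_survival_copula_Min_gt[OF Ycop \<open>0 < n\<close>]
    unfolding U_def V_def by simp
qed

end
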